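(* Let $f:(0,\infty)\to\mathbb{R}$ be real analytic and not identically zero. Let $\mathcal I=\{x\in(0,\infty):f(x)=0\}$. Assume that: (1) for every sequence $x_j\in(0,\infty)$ with $x_j\to0$ or $x_j\to\infty$ and such that $\mathrm{dist}(x_j,\mathcal I)\to0$, we have $\kappa(f,x_j)\to\infty$; (2) both as $x\to0$ and as $x\to\infty$ we have $\limsup|H(f,x)|\leq C$ for some constant $C>0$, where $H(f,x)=\frac{x^2f(x)f''(x)}{f(x)^2+x^2f'(x)^2}$. The part of this hypothesis concerning $x\to0$ is automatically satisfied if $f$ admits an analytic extension to $(-\epsilon,\infty)$ for some $\epsilon>0$. Then $f$ is amenable.
   Context: Relative distance on $\mathbb{R}$: $\mathrm{dist}(x,y)=0$ if $x=y=0$, $\mathrm{dist}(x,y)=|\log(y/x)|$ if $xy>0$, and $\mathrm{dist}(x,y)=\infty$ otherwise; for a set $S$, $\mathrm{dist}(x,S)=\inf_{s\in S}\mathrm{dist}(x,s)$. For a real analytic function $f$ on an open set $\Omega\subseteq\mathbb{R}$, not identically zero, the condition number is $\kappa(f,x)=0$ if $x=0$, $\kappa(f,x)=\infty$ if $x\neq0$ and $f(x)=0$, and $\kappa(f,x)=|x|\,|f'(x)|/|f(x)|$ otherwise; set $\mu(f,x)=1+\kappa(f,x)$. The function $f:\Omega\to\mathbb{R}$ is called amenable if there is a constant $C>0$ such that for every $x\in\Omega$ with $\kappa(f,x)<\infty$, the set $B_x=\{y\in\mathbb{R}:\mathrm{dist}(y,x)<1/(C\mu(f,x))\}$ is contained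 in $\Omega$, and $\mu(f,y)\leq C\mu(f,x)$ for all $y\in B_x$. *)

theory Defs
  imports "HOL-Analysis.Analysis" "HOL-Library.Liminf_Limsup"
begin

definition real_analytic_on :: "(real \<Rightarrow> real) \<Rightarrow> real set \<Rightarrow> bool" where
  "real_analytic_on f S \<longleftrightarrow>
     (\<forall>x\<in>S. \<exists>r>0. \<exists>a::nat \<Rightarrow> real.
        \<forall>y. \<bar>y - x\<bar> < r \<longrightarrow> (\<lambda>n. a n * (y - x) ^ n) sums f y)"

definition reldist :: "real \<Rightarrow> real \<Rightarrow> ereal" where
  "reldist x y =
     (if x = 0 \<and> y = 0 then 0
      else if x * y > 0 then ereal \<bar>ln (y / x)\<bar>
      else \<infinity>)"

definition reldist_set :: "real \<Rightarrow> real set \<Rightarrow> ereal" where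
  "reldist_set x S = (INF s\<in>S. reldist x s)"

definition kappa :: "(real \<Rightarrow> real) \<Rightarrow> real \<Rightarrow> ereal" where
  "kappa f x =
     (if x = 0 then 0
      else if f x = 0 then \<infinity>
      else ereal (\<bar>x\<bar> * \<bar>deriv f x\<bar> / \<bar>f x\<bar>))"

definition mu :: "(real \<Rightarrow> real) \<Rightarrow> real \<Rightarrow> ereal" where
  "mu f x = 1 + kappa f x"

definition amenable :: "(real \<Rightarrow> real) \<Rightarrow> real set \<Rightarrow> bool" where
  "amenable f \<Omega> \<longleftrightarrow>
     (\<exists>C::real. C > 0 \<and>
        (\<forall>x\<in>\<Omega>. kappa f x < \<infinity> \<longrightarrow>
           (let B = {y. reldist y x < 1 / (ereal C * mu f x)} in
              B \<subseteq> \<Omega> \<and> (\<forall>y\<in>B. mu f y \<le> ereal C * mu f x))))"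

definition Hf :: "(real \<Rightarrow> real) \<Rightarrow> real \<Rightarrow> real" where
  "Hf f x = x^2 * f x * deriv (deriv f) x / ((f x)^2 + x^2 * (deriv f x)^2)"

end

theory Submission
  imports Defs
begin

(*
  In the variable t = ln x put g = f o exp; then g'/g is the elasticity L = x f'/f of f, and
  the angle arctan (g'/g) has derivative (g g'' - g'^2)/(g^2 + g'^2) = H(f,x) + (F P - P^2)/(F^2 + P^2)
  with F = f x, P = x f' x, so its absolute value is at most |H(f,x)| + 3/2.  Analyticity makes H
  locally bounded on (0,oo), also at a zero of order k >= 2, where |H| <= |f f''|/f'^2 tends to
  (k - 1)/k; hypothesis (2) bounds H near 0 and near oo.  Hence arctan L is Lipschitz in ln x.
  Since pi/2 - |arctan L| >= 1/(1 + |L|), along a relative distance of order 1/(1 + kappa(f,x))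
  the angle stays away from pi/2 (so f has no zero, as g'/g would blow up) and |L| at most doubles:
  this is amenability.
*)

lemma arctan_ge_divide_one_plus:
  assumes "0 \<le> v"
  shows "v / (1 + v) \<le> arctan v"
proof -
  define d where "d u = u / (1 + u) - arctan u" for u :: real
  have "d v \<le> d 0"
  proof (rule DERIV_nonpos_imp_decreasing_open[OF assms])
    fix u :: real assume "0 < u"
    have "(d has_real_derivative 1 / (1 + u)^2 - 1 / (1 + u^2)) (at u)"
    proof -
      have "(d has_real_derivative (1 * (1 + u) - u * (0 + 1)) / ((1 + u) * (1 + u)) - inverse (1 + u^2)) (at u)"
        unfolding d_def using \<open>0 < u\<close> by (intro derivative_eq_intros refl) auto
      then show ?thesis by (simp add: inverse_eq_divide power2_eq_square)
    qed
    moreover have "1 / (1 + u)^2 \<le> 1 / (1 + u^2)"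
      using \<open>0 < u\<close> by (intro divide_left_mono mult_pos_pos) (simp_all add: power2_sum add_pos_nonneg)
    ultimately show "\<exists>y. (d has_real_derivative y) (at u) \<and> y \<le> 0"
      by (intro exI[of _ "1 / (1 + u)^2 - 1 / (1 + u^2)"]) simp
  next
    show "continuous_on {0..v} d"
      unfolding d_def by (intro continuous_intros) auto
  qed
  then show ?thesis by (simp add: d_def)
qed

lemma pi_half_minus_abs_arctan:
  assumes "L \<noteq> 0"
  shows "pi/2 - \<bar>arctan L\<bar> = arctan (1 / \<bar>L\<bar>)"
  using arctan_inverse[of "\<bar>L\<bar>"] assms by (simp add: abs_arctan inverse_eq_divide)

lemma abs_le_if_abs_arctan_le:
  assumes "\<bar>arctan L\<bar> \<le> pi/2 - \<eta>" and "0 < \<eta>"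
  shows "\<bar>L\<bar> \<le> 1 / \<eta>"
proof (cases "L = 0")
  case False
  then have "\<eta> \<le> 1 / \<bar>L\<bar>"
    using assms(1) pi_half_minus_abs_arctan[of L] arctan_le_self[of "1 / \<bar>L\<bar>"] by simp
  then show ?thesis
    using False assms(2) by (simp add: field_simps)
qed (use assms in simp)

lemma inverse_one_plus_abs_le_pi_half_minus_abs_arctan:
  "1 / (1 + \<bar>L\<bar>) \<le> pi/2 - \<bar>arctan L\<bar>"
proof (cases "L = 0")
  case True
  then show ?thesis using pi_gt3 by simp
next
  case False
  have "1 / (1 + \<bar>L\<bar>) = (1 / \<bar>L\<bar>) / (1 + 1 / \<bar>L\<bar>)"
    using False by (simp add: field_simps)
  also have "\<dots> \<le> arctan (1 / \<bar>L\<bar>)"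
    by (rule arctan_ge_divide_one_plus) simp
  finally show ?thesis
    using pi_half_minus_abs_arctan[OF False] by simp
qed
lemma DERIV_arctan_divide:
  assumes "(g has_real_derivative g') (at t)" and "(h has_real_derivative h') (at t)"
    and "g t \<noteq> 0"
  shows "((\<lambda>t. arctan (h t / g t)) has_real_derivative
           (g t * h' - h t * g') / ((g t)^2 + (h t)^2)) (at t)"
proof -
  have "((\<lambda>t. arctan (h t / g t)) has_real_derivative
          inverse (1 + (h t / g t)^2) * ((h' * g t - h t * g') / (g t * g t))) (at t)"
    using assms by (intro derivative_eq_intros DERIV_arctan) auto
  moreover have "(g t)^2 + (h t)^2 \<noteq> 0"
    using assms(3) by (simp add: add_pos_nonneg)
  then have "inverse (1 + (h t / g t)^2) * ((h' * g t - h t * g') / (g t * g t))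
      = (g t * h' - h t * g') / ((g t)^2 + (h t)^2)"
    using assms(3) by (simp add: divide_simps) (simp add: algebra_simps power2_eq_square)
  ultimately show ?thesis by simp
qed

lemma obtain_first_zero:
  fixes g :: "real \<Rightarrow> real"
  assumes "continuous_on {a..b} g" and "g a \<noteq> 0" and "u \<in> {a..b}" and "g u = 0"
  obtains s where "a < s" "s \<le> b" "g s = 0" "\<And>v. a \<le> v \<Longrightarrow> v < s \<Longrightarrow> g v \<noteq> 0"
proof -
  define Z where "Z = {a..b} \<inter> g -` {0}"
  have "closed Z"
    unfolding Z_def using assms(1) by (rule continuous_closed_preimage) auto
  moreover have "Z \<noteq> {}" and "bdd_below Z"
    using assms(3,4) by (auto simp: Z_def)
  ultimately have "Inf Z \<in> Z"
    by (rule closed_contains_Inf[rotated 2])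
  moreover have "g v \<noteq> 0" if "a \<le> v" "v < Inf Z" for v
    using cInf_lower[of v Z] \<open>bdd_below Z\<close> that \<open>Inf Z \<in> Z\<close> by (force simp: Z_def)
  moreover have "a \<noteq> Inf Z"
    using \<open>Inf Z \<in> Z\<close> assms(2) by (auto simp: Z_def)
  ultimately show ?thesis
    by (intro that[of "Inf Z"]) (auto simp: Z_def)
qed

lemma nonzero_if_log_deriv_bounded:
  fixes g g' :: "real \<Rightarrow> real"
  assumes deriv: "\<And>t. (g has_real_derivative g' t) (at t)"
    and "a < s"
    and nonzero: "\<And>u. a \<le> u \<Longrightarrow> u < s \<Longrightarrow> g u \<noteq> 0"
    and bounded: "\<And>u. a \<le> u \<Longrightarrow> u < s \<Longrightarrow> \<bar>g' u / g u\<bar> \<le> K"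
  shows "g s \<noteq> 0"
proof -
  have "0 \<le> K"
    using bounded[of a] \<open>a < s\<close> by linarith
  define c where "c = exp (ln ((g a)^2) - 2 * K * (s - a))"
  have lower: "c \<le> (g u)^2" if "a \<le> u" "u < s" for u
  proof -
    have "norm (ln ((g u)^2) - ln ((g a)^2)) \<le> 2 * K * norm (u - a)"
    proof (rule field_differentiable_bound[where S = "{a..u}" and f' = "\<lambda>t. 2 * (g' t / g t)"])
      fix t assume t: "t \<in> {a..u}"
      have "((\<lambda>t. ln ((g t)^2)) has_real_derivative 2 * (g' t / g t)) (at t)"
        using deriv[of t] nonzero[of t] t \<open>u < s\<close>
        by (auto intro!: derivative_eq_intros simp: field_simps power2_eq_square zero_less_mult_iff)
      then show "((\<lambda>t. ln ((g t)^2)) has_real_derivative 2 * (g' t / g t)) (at t within {a..u})"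
        by (rule has_field_derivative_at_within)
      show "norm (2 * (g' t / g t)) \<le> 2 * K"
        using bounded[of t] t \<open>u < s\<close> by simp
    qed (use that in auto)
    moreover have "2 * K * norm (u - a) \<le> 2 * K * (s - a)"
      using that \<open>0 \<le> K\<close> by (intro mult_left_mono) auto
    ultimately have "ln ((g a)^2) - 2 * K * (s - a) \<le> ln ((g u)^2)"
      unfolding real_norm_def by linarith
    then show ?thesis
      unfolding c_def using nonzero[OF that] by (metis exp_ln exp_le_cancel_iff zero_less_power2)
  qed
  have "((\<lambda>u. (g u)^2) \<longlongrightarrow> (g s)^2) (at_left s)"
    using DERIV_isCont[OF deriv[of s]]
    by (intro tendsto_intros) (simp add: isCont_def filterlim_at_split)
  moreover have "eventually (\<lambda>u. c \<le> (g u)^2) (at_left s)"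
    using eventually_at_left_real[OF \<open>a < s\<close>] by eventually_elim (use lower in auto)
  ultimately have "c \<le> (g s)^2"
    by (rule tendsto_lowerbound) simp
  then show ?thesis
    unfolding c_def by (metis exp_gt_zero not_le power_zero_numeral)
qed

lemma arctan_ratio_diff_le:
  fixes g g1 g2 :: "real \<Rightarrow> real"
  assumes d1: "\<And>t. (g has_real_derivative g1 t) (at t)"
    and d2: "\<And>t. (g1 has_real_derivative g2 t) (at t)"
    and rate: "\<And>t. g t \<noteq> 0 \<Longrightarrow> \<bar>(g t * g2 t - (g1 t)^2) / ((g t)^2 + (g1 t)^2)\<bar> \<le> M"
    and "a \<le> b" and nonzero: "\<And>t. a \<le> t \<Longrightarrow> t \<le> b \<Longrightarrow> g t \<noteq> 0"
  shows "\<bar>arctan (g1 b / g b) - arctan (g1 a / g a)\<bar> \<le> M * (b - a)"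
proof -
  have "norm (arctan (g1 b / g b) - arctan (g1 a / g a)) \<le> M * norm (b - a)"
  proof (rule field_differentiable_bound[where S = "{a..b}"
        and f' = "\<lambda>t. (g t * g2 t - (g1 t)^2) / ((g t)^2 + (g1 t)^2)"])
    fix t assume t: "t \<in> {a..b}"
    show "((\<lambda>t. arctan (g1 t / g t)) has_real_derivative
            (g t * g2 t - (g1 t)^2) / ((g t)^2 + (g1 t)^2)) (at t within {a..b})"
      using DERIV_arctan_divide[OF d1 d2 nonzero] t
      by (auto simp: power2_eq_square intro: has_field_derivative_at_within)
    show "norm ((g t * g2 t - (g1 t)^2) / ((g t)^2 + (g1 t)^2)) \<le> M"
      using rate nonzero t by simp
  qed (use \<open>a \<le> b\<close> in auto)
  then show ?thesis
    using \<open>a \<le> b\<close> by simp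
qed

lemma arctan_ratio_lipschitz_right:
  fixes g g1 g2 :: "real \<Rightarrow> real"
  assumes d1: "\<And>t. (g has_real_derivative g1 t) (at t)"
    and d2: "\<And>t. (g1 has_real_derivative g2 t) (at t)"
    and rate: "\<And>t. g t \<noteq> 0 \<Longrightarrow> \<bar>(g t * g2 t - (g1 t)^2) / ((g t)^2 + (g1 t)^2)\<bar> \<le> M"
    and ga: "g a \<noteq> 0" and "a \<le> b"
    and small: "M * (b - a) < pi/2 - \<bar>arctan (g1 a / g a)\<bar>"
  shows "g b \<noteq> 0 \<and> \<bar>arctan (g1 b / g b) - arctan (g1 a / g a)\<bar> \<le> M * (b - a)"
proof -
  have "0 \<le> M"
    using rate[OF ga] by linarith
  txt \<open>Before the first zero s of g the angle stays at distance \<open>\<eta>\<close> from \<open>\<plusminus>pi/2\<close>, so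
    \<open>g1/g = (ln \<bar>g\<bar>)'\<close> is bounded there and g cannot reach 0 at s.\<close>
  have nonzero: "g t \<noteq> 0" if "a \<le> t" "t \<le> b" for t
  proof
    assume "g t = 0"
    have "continuous_on {a..b} g"
      using DERIV_isCont[OF d1] by (simp add: continuous_at_imp_continuous_on)
    moreover have "t \<in> {a..b}"
      using that by simp
    ultimately obtain s where s: "a < s" "s \<le> b" "g s = 0"
      and before: "\<And>v. a \<le> v \<Longrightarrow> v < s \<Longrightarrow> g v \<noteq> 0"
      using obtain_first_zero ga \<open>g t = 0\<close> by blast
    define \<eta> where "\<eta> = pi/2 - \<bar>arctan (g1 a / g a)\<bar> - M * (b - a)"
    have log_deriv_bound: "\<bar>g1 u / g u\<bar> \<le> 1 / \<eta>" if "a \<le> u" "u < s" for u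
    proof (rule abs_le_if_abs_arctan_le)
      have "\<bar>arctan (g1 u / g u) - arctan (g1 a / g a)\<bar> \<le> M * (u - a)"
        using arctan_ratio_diff_le[OF d1 d2 rate, of a u] before that by simp
      also have "\<dots> \<le> M * (b - a)"
        using \<open>0 \<le> M\<close> that s by (intro mult_left_mono) auto
      finally show "\<bar>arctan (g1 u / g u)\<bar> \<le> pi/2 - \<eta>"
        unfolding \<eta>_def by linarith
      show "0 < \<eta>"
        using small unfolding \<eta>_def by linarith
    qed
    have "g s \<noteq> 0"
      by (rule nonzero_if_log_deriv_bounded[OF d1 \<open>a < s\<close>]) (use before log_deriv_bound in auto)
    then show False
      using \<open>g s = 0\<close> by contradiction
  qed
  then show ?thesis
    using arctan_ratio_diff_le[OF d1 d2 rate \<open>a \<le> b\<close>] \<open>a \<le> b\<close> by simp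
qed

lemma arctan_ratio_lipschitz:
  fixes g g1 g2 :: "real \<Rightarrow> real"
  assumes d1: "\<And>t. (g has_real_derivative g1 t) (at t)"
    and d2: "\<And>t. (g1 has_real_derivative g2 t) (at t)"
    and rate: "\<And>t. g t \<noteq> 0 \<Longrightarrow> \<bar>(g t * g2 t - (g1 t)^2) / ((g t)^2 + (g1 t)^2)\<bar> \<le> M"
    and ga: "g a \<noteq> 0"
    and small: "M * \<bar>b - a\<bar> < pi/2 - \<bar>arctan (g1 a / g a)\<bar>"
  shows "g b \<noteq> 0 \<and> \<bar>arctan (g1 b / g b) - arctan (g1 a / g a)\<bar> \<le> M * \<bar>b - a\<bar>"
proof (cases "a \<le> b")
  case True
  then show ?thesis
    using arctan_ratio_lipschitz_right[OF d1 d2 rate ga True] small by simp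
next
  case False
  txt \<open>The reflection \<open>t \<mapsto> -t\<close> leaves the rate \<open>(g g2 - g1\<^sup>2)/(g\<^sup>2 + g1\<^sup>2)\<close> unchanged.\<close>
  define h where "h t = g (- t)" for t
  define h1 where "h1 t = - g1 (- t)" for t
  define h2 where "h2 t = g2 (- t)" for t
  have e1: "(h has_real_derivative h1 t) (at t)" for t
    unfolding h_def h1_def using DERIV_chain2[OF d1 DERIV_minus[OF DERIV_ident]] by simp
  have e2: "(h1 has_real_derivative h2 t) (at t)" for t
    unfolding h1_def h2_def using DERIV_minus[OF DERIV_chain2[OF d2 DERIV_minus[OF DERIV_ident]]] by simp
  have "\<bar>(h t * h2 t - (h1 t)^2) / ((h t)^2 + (h1 t)^2)\<bar> \<le> M" if "h t \<noteq> 0" for t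
    using rate[of "- t"] that unfolding h_def h1_def h2_def by simp
  from arctan_ratio_lipschitz_right[OF e1 e2 this, of "- a" "- b"] show ?thesis
    using False ga small unfolding h_def h1_def by (simp add: arctan_minus abs_minus_commute)
qed

definition powser_expansion :: "(real \<Rightarrow> real) \<Rightarrow> (nat \<Rightarrow> real) \<Rightarrow> real \<Rightarrow> real \<Rightarrow> bool" where
  "powser_expansion f a z r \<longleftrightarrow> (\<forall>y\<in>ball z r. (\<lambda>n. a n * (y - z)^n) sums f y)"

lemma real_analytic_on_iff_powser_expansion:
  "real_analytic_on f S \<longleftrightarrow> (\<forall>x\<in>S. \<exists>r>0. \<exists>a. powser_expansion f a x r)"
  by (simp add: real_analytic_on_def powser_expansion_def Ball_def dist_real_def abs_minus_commute)

lemma powser_expansion_has_real_derivative: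
  assumes f: "powser_expansion f a z r" and y: "y \<in> ball z r"
  shows "(f has_real_derivative (\<Sum>n. diffs a n * (y - z)^n)) (at y)"
    and "summable (\<lambda>n. diffs a n * (y - z)^n)"
proof -
  have summable: "summable (\<lambda>n. a n * w^n)" if "norm w < r" for w :: real
  proof -
    have "z + w \<in> ball z r"
      using that by (simp add: dist_real_def)
    then show ?thesis
      using f unfolding powser_expansion_def by (metis add_diff_cancel_left' sums_summable)
  qed
  have outer: "((\<lambda>w. \<Sum>n. a n * w^n) has_real_derivative (\<Sum>n. diffs a n * (y - z)^n)) (at (y - z))"
    by (rule termdiffs_strong'[of r]) (use summable y in \<open>auto simp: dist_real_def abs_minus_commute\<close>)
  have inner: "((\<lambda>y. y - z) has_real_derivative 1) (at y)"
    by (auto intro!: derivative_eq_intros)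
  have "((\<lambda>y. \<Sum>n. a n * (y - z)^n) has_real_derivative (\<Sum>n. diffs a n * (y - z)^n)) (at y)"
    using DERIV_chain2[OF outer inner] by simp
  then show "(f has_real_derivative (\<Sum>n. diffs a n * (y - z)^n)) (at y)"
    by (rule has_field_derivative_transform_within_open[OF _ open_ball y])
       (use f in \<open>auto simp: powser_expansion_def sums_iff\<close>)
  show "summable (\<lambda>n. diffs a n * (y - z)^n)"
    by (rule termdiff_converges[of _ r]) (use summable y in \<open>auto simp: dist_real_def abs_minus_commute\<close>)
qed

lemma powser_expansion_DERIV:
  "powser_expansion f a z r \<Longrightarrow> y \<in> ball z r \<Longrightarrow> (f has_real_derivative deriv f y) (at y)"
  using powser_expansion_has_real_derivative(1) DERIV_imp_deriv by metis

lemma powser_expansion_deriv: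
  assumes "powser_expansion f a z r"
  shows "powser_expansion (deriv f) (diffs a) z r"
  unfolding powser_expansion_def
  using powser_expansion_has_real_derivative[OF assms] DERIV_imp_deriv by (metis summable_sums)

lemma powser_expansion_center:
  "powser_expansion f a z r \<Longrightarrow> 0 < r \<Longrightarrow> f z = a 0"
  unfolding powser_expansion_def by (metis centre_in_ball diff_self powser_sums_zero_iff)

lemma powser_expansion_factor:
  assumes f: "powser_expansion f a z r" and below: "\<And>i. i < k \<Longrightarrow> a i = 0"
  obtains q where "powser_expansion q (\<lambda>n. a (n + k)) z r"
    and "\<And>y. y \<in> ball z r \<Longrightarrow> f y = (y - z)^k * q y"
proof
  define q where "q y = (\<Sum>n. a (n + k) * (y - z)^n)" for y
  have "(\<lambda>n. a (n + k) * (y - z)^n) sums q y \<and> f y = (y - z)^k * q y" if "y \<in> ball z r" for y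
  proof -
    have "(\<lambda>n. a n * (y - z)^n) sums f y"
      using f that unfolding powser_expansion_def by blast
    then have "(\<lambda>n. a (n + k) * (y - z)^(n + k)) sums f y"
      using sums_iff_shift[of "\<lambda>n. a n * (y - z)^n" k "f y"] below by simp
    then have f_sums: "(\<lambda>n. (y - z)^k * (a (n + k) * (y - z)^n)) sums f y"
      by (simp add: power_add algebra_simps)
    have "summable (\<lambda>n. a (n + k) * (y - z)^n)"
    proof (cases "y = z")
      case False
      then show ?thesis
        using summable_mult[OF sums_summable[OF f_sums], of "1 / (y - z)^k"] by simp
    qed simp
    then have q_sums: "(\<lambda>n. a (n + k) * (y - z)^n) sums q y"
      unfolding q_def by (rule summable_sums)
    with sums_unique2[OF f_sums sums_mult[OF q_sums]] show ?thesis
      by simp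
  qed
  then show "powser_expansion q (\<lambda>n. a (n + k)) z r" and "\<And>y. y \<in> ball z r \<Longrightarrow> f y = (y - z)^k * q y"
    unfolding powser_expansion_def by auto
qed

lemma real_analytic_on_deriv:
  "real_analytic_on f S \<Longrightarrow> real_analytic_on (deriv f) S"
  unfolding real_analytic_on_iff_powser_expansion by (meson powser_expansion_deriv)

lemma real_analytic_on_DERIV:
  assumes "real_analytic_on f S" and "x \<in> S"
  shows "(f has_real_derivative deriv f x) (at x)"
  using assms unfolding real_analytic_on_iff_powser_expansion
  by (meson centre_in_ball powser_expansion_DERIV)

lemma abs_Hf_le:
  assumes "deriv f x \<noteq> 0"
  shows "\<bar>Hf f x\<bar> \<le> \<bar>f x * deriv (deriv f) x\<bar> / (deriv f x)^2"
proof -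
  define N where "N = \<bar>f x * deriv (deriv f) x\<bar>"
  define D where "D = (f x)^2 + x^2 * (deriv f x)^2"
  have "0 \<le> N" "0 < (deriv f x)^2" "0 \<le> D"
    using assms by (simp_all add: N_def D_def)
  have "x^2 * N * (deriv f x)^2 \<le> N * D"
    using \<open>0 \<le> N\<close> by (simp add: D_def algebra_simps)
  then have "x^2 * N / D \<le> N / (deriv f x)^2"
    using \<open>0 \<le> N\<close> \<open>0 < (deriv f x)^2\<close> \<open>0 \<le> D\<close>
    by (cases "D = 0") (simp_all add: field_simps)
  then show ?thesis
    by (simp add: Hf_def N_def D_def abs_mult)
qed

lemma eventually_abs_le_if_isCont:
  fixes h :: "real \<Rightarrow> real"
  assumes "isCont h z"
  shows "eventually (\<lambda>x. \<bar>h x\<bar> \<le> \<bar>h z\<bar> + 1) (nhds z)"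
proof -
  have "((\<lambda>x. \<bar>h x\<bar>) \<longlongrightarrow> \<bar>h z\<bar>) (at z)"
    using assms by (intro tendsto_intros) (simp add: isCont_def)
  then have "eventually (\<lambda>x. \<bar>h x\<bar> < \<bar>h z\<bar> + 1) (at z)"
    by (rule order_tendstoD) simp
  then show ?thesis
    by (auto simp: eventually_nhds_conv_at elim: eventually_mono)
qed

lemma isCont_Hf:
  assumes "isCont f z" "isCont (deriv f) z" "isCont (deriv (deriv f)) z"
    and "z \<noteq> 0" and "f z \<noteq> 0 \<or> deriv f z \<noteq> 0"
  shows "isCont (Hf f) z"
proof -
  have "(f z)^2 + z^2 * (deriv f z)^2 \<noteq> 0"
    using assms(4,5) sum_power2_gt_zero_iff[of "f z" "z * deriv f z"] by (auto simp: power_mult_distrib)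
  then show ?thesis
    unfolding Hf_def[abs_def] using assms(1-3) by (intro continuous_intros)
qed

lemma powser_expansion_isCont:
  "powser_expansion f a z r \<Longrightarrow> 0 < r \<Longrightarrow> isCont f z"
  using powser_expansion_DERIV[of f a z r z] DERIV_isCont by simp

lemma DERIV_shifted_power_mult:
  assumes "(g has_real_derivative g') (at y)"
  shows "((\<lambda>y. (y - z)^Suc n * g y) has_real_derivative
           (y - z)^n * (of_nat (Suc n) * g y + (y - z) * g')) (at y)"
proof -
  have "((\<lambda>y. (y - z)^Suc n) has_real_derivative of_nat (Suc n) * (y - z)^n) (at y)"
    using DERIV_power[OF DERIV_diff[OF DERIV_ident DERIV_const[of z]], where n = "Suc n"] by simp
  from DERIV_mult[OF this assms] show ?thesis
    by (simp add: algebra_simps)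
qed

lemma derivs_at_multiple_zero:
  assumes q: "powser_expansion q b z r"
    and f: "\<And>y. y \<in> ball z r \<Longrightarrow> f y = (y - z)^(m + 2) * q y"
  shows "\<And>y. y \<in> ball z r \<Longrightarrow>
           deriv f y = (y - z)^(m + 1) * (of_nat (m + 2) * q y + (y - z) * deriv q y)"
    and "\<And>y. y \<in> ball z r \<Longrightarrow>
           deriv (deriv f) y = (y - z)^m * (of_nat (m + 2) * of_nat (m + 1) * q y
             + 2 * of_nat (m + 2) * (y - z) * deriv q y + (y - z)^2 * deriv (deriv q) y)"
proof -
  note DERIV_q = powser_expansion_DERIV[OF q]
    and DERIV_q' = powser_expansion_DERIV[OF powser_expansion_deriv[OF q]]
  define S where "S y = of_nat (m + 2) * q y + (y - z) * deriv q y" for y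
  have deriv_f: "deriv f y = (y - z)^(m + 1) * S y" if "y \<in> ball z r" for y
  proof -
    have "((\<lambda>y. (y - z)^Suc (m + 1) * q y) has_real_derivative (y - z)^(m + 1) * S y) (at y)"
      using DERIV_shifted_power_mult[OF DERIV_q[OF that], of z "m + 1"] by (simp add: S_def)
    then have "(f has_real_derivative (y - z)^(m + 1) * S y) (at y)"
      by (rule has_field_derivative_transform_within_open[OF _ open_ball that]) (simp add: f)
    then show ?thesis
      by (rule DERIV_imp_deriv)
  qed
  then show "\<And>y. y \<in> ball z r \<Longrightarrow>
      deriv f y = (y - z)^(m + 1) * (of_nat (m + 2) * q y + (y - z) * deriv q y)"
    by (simp add: S_def)
  define R where "R y = of_nat (m + 2) * of_nat (m + 1) * q y + 2 * of_nat (m + 2) * (y - z) * deriv q y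
      + (y - z)^2 * deriv (deriv q) y" for y
  fix y assume y: "y \<in> ball z r"
  have "(S has_real_derivative of_nat (m + 3) * deriv q y + (y - z) * deriv (deriv q) y) (at y)"
    unfolding S_def using DERIV_q[OF y] DERIV_q'[OF y]
    by (auto intro!: derivative_eq_intros simp: algebra_simps)
  from DERIV_shifted_power_mult[OF this, of z m]
  have "((\<lambda>y. (y - z)^Suc m * S y) has_real_derivative (y - z)^m * R y) (at y)"
    by (simp add: S_def R_def algebra_simps power2_eq_square)
  then have "(deriv f has_real_derivative (y - z)^m * R y) (at y)"
    by (rule has_field_derivative_transform_within_open[OF _ open_ball y]) (simp add: deriv_f)
  then have "deriv (deriv f) y = (y - z)^m * R y"
    by (rule DERIV_imp_deriv)
  then show "deriv (deriv f) y = (y - z)^m * (of_nat (m + 2) * of_nat (m + 1) * q y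
      + 2 * of_nat (m + 2) * (y - z) * deriv q y + (y - z)^2 * deriv (deriv q) y)"
    by (simp add: R_def)
qed

lemma Hf_bounded_near_multiple_zero:
  assumes q: "powser_expansion q b z r" and "0 < r" and "q z \<noteq> 0"
    and f: "\<And>y. y \<in> ball z r \<Longrightarrow> f y = (y - z)^(m + 2) * q y"
  shows "\<exists>K. eventually (\<lambda>x. f x \<noteq> 0 \<longrightarrow> \<bar>Hf f x\<bar> \<le> K) (nhds z)"
proof -
  define S where "S y = of_nat (m + 2) * q y + (y - z) * deriv q y" for y
  define R where "R y = of_nat (m + 2) * of_nat (m + 1) * q y + 2 * of_nat (m + 2) * (y - z) * deriv q y
      + (y - z)^2 * deriv (deriv q) y" for y
  define \<rho> where "\<rho> x = \<bar>q x * R x\<bar> / (S x)^2" for x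
  have bound: "\<bar>Hf f x\<bar> \<le> \<rho> x" if "x \<in> ball z r" "x \<noteq> z" "S x \<noteq> 0" for x
  proof -
    have f': "deriv f x = (x - z)^(m + 1) * S x"
      and f'': "deriv (deriv f) x = (x - z)^m * R x"
      using derivs_at_multiple_zero[OF q f that(1)] by (simp_all add: S_def R_def)
    have "f x * deriv (deriv f) x = ((x - z)^(m + 1))^2 * (q x * R x)"
      using that by (simp add: f f'' power2_eq_square power_add algebra_simps)
    moreover have "(deriv f x)^2 = ((x - z)^(m + 1))^2 * (S x)^2"
      by (simp add: f' power_mult_distrib)
    ultimately show ?thesis
      using abs_Hf_le[of f x] that f' by (simp add: \<rho>_def abs_mult)
  qed
  have q': "powser_expansion (deriv q) (diffs b) z r"
    and q'': "powser_expansion (deriv (deriv q)) (diffs (diffs b)) z r"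
    using q by (simp_all add: powser_expansion_deriv)
  note cont = powser_expansion_isCont[OF q \<open>0 < r\<close>] powser_expansion_isCont[OF q' \<open>0 < r\<close>]
    powser_expansion_isCont[OF q'' \<open>0 < r\<close>]
  have "S z \<noteq> 0"
    using \<open>q z \<noteq> 0\<close> by (simp add: S_def)
  have "isCont S z"
    unfolding S_def using cont by (intro continuous_intros) auto
  have "isCont \<rho> z"
    unfolding \<rho>_def R_def using cont \<open>isCont S z\<close> \<open>S z \<noteq> 0\<close> by (intro continuous_intros) auto
  have "eventually (\<lambda>x. x \<in> ball z r) (nhds z)"
    using \<open>0 < r\<close> by (intro eventually_nhds_in_open) simp_all
  moreover have "eventually (\<lambda>x. S x \<noteq> 0) (nhds z)"
    using \<open>isCont S z\<close> \<open>S z \<noteq> 0\<close> by (simp add: isCont_def tendsto_imp_eventually_ne eventually_nhds_conv_at)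
  moreover have "eventually (\<lambda>x. \<bar>\<rho> x\<bar> \<le> \<bar>\<rho> z\<bar> + 1) (nhds z)"
    using \<open>isCont \<rho> z\<close> by (rule eventually_abs_le_if_isCont)
  ultimately have "eventually (\<lambda>x. f x \<noteq> 0 \<longrightarrow> \<bar>Hf f x\<bar> \<le> \<bar>\<rho> z\<bar> + 1) (nhds z)"
  proof eventually_elim
    case (elim x)
    have "f z = 0"
      using f[of z] \<open>0 < r\<close> by simp
    then show ?case
      using bound[of x] elim by force
  qed
  then show ?thesis ..
qed

lemma powser_expansion_obtain_multiple_zero:
  assumes f: "powser_expansion f a z r" and "0 < r"
    and "a 0 = 0" and "a 1 = 0" and "\<exists>n. a n \<noteq> 0"
  obtains m b q where "powser_expansion q b z r" and "q z \<noteq> 0"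
    and "\<And>y. y \<in> ball z r \<Longrightarrow> f y = (y - z)^(m + 2) * q y"
proof -
  define k where "k = (LEAST n. a n \<noteq> 0)"
  have "a k \<noteq> 0" and below: "\<And>i. i < k \<Longrightarrow> a i = 0"
    unfolding k_def using LeastI_ex[OF \<open>\<exists>n. a n \<noteq> 0\<close>] not_less_Least by blast+
  have "2 \<le> k"
  proof (rule ccontr)
    assume "\<not> 2 \<le> k"
    then have "k = 0 \<or> k = 1" by auto
    then show False
      using \<open>a k \<noteq> 0\<close> \<open>a 0 = 0\<close> \<open>a 1 = 0\<close> by auto
  qed
  obtain q where q: "powser_expansion q (\<lambda>n. a (n + k)) z r"
    and f_eq: "\<And>y. y \<in> ball z r \<Longrightarrow> f y = (y - z)^k * q y"
    using powser_expansion_factor[OF f below] by blast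
  have "q z \<noteq> 0"
    using powser_expansion_center[OF q \<open>0 < r\<close>] \<open>a k \<noteq> 0\<close> by simp
  moreover have "k = (k - 2) + 2"
    using \<open>2 \<le> k\<close> by simp
  ultimately show ?thesis
    using q f_eq by (intro that[of q _ "k - 2"]) simp_all
qed

lemma Hf_locally_bounded:
  assumes f: "powser_expansion f a z r" and "0 < r" and "z \<noteq> 0"
  shows "\<exists>K. eventually (\<lambda>x. f x \<noteq> 0 \<longrightarrow> \<bar>Hf f x\<bar> \<le> K) (nhds z)"
proof -
  have f': "powser_expansion (deriv f) (diffs a) z r"
    and f'': "powser_expansion (deriv (deriv f)) (diffs (diffs a)) z r"
    using f by (simp_all add: powser_expansion_deriv)
  consider (regular) "f z \<noteq> 0 \<or> deriv f z \<noteq> 0"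
    | (multiple_zero) "a 0 = 0" "a 1 = 0" "\<exists>n. a n \<noteq> 0"
    | (vanishing) "\<forall>n. a n = 0"
    using powser_expansion_center[OF f \<open>0 < r\<close>] powser_expansion_center[OF f' \<open>0 < r\<close>]
    by (fastforce simp: diffs_def)
  then show ?thesis
  proof cases
    case regular
    have "isCont (Hf f) z"
      using powser_expansion_isCont[OF f \<open>0 < r\<close>] powser_expansion_isCont[OF f' \<open>0 < r\<close>]
        powser_expansion_isCont[OF f'' \<open>0 < r\<close>] \<open>z \<noteq> 0\<close> regular
      by (rule isCont_Hf)
    then have "eventually (\<lambda>x. \<bar>Hf f x\<bar> \<le> \<bar>Hf f z\<bar> + 1) (nhds z)"
      by (rule eventually_abs_le_if_isCont)
    then show ?thesis
      by (auto elim: eventually_mono)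
  next
    case multiple_zero
    then obtain m b q where "powser_expansion q b z r" and "q z \<noteq> 0"
      and "\<And>y. y \<in> ball z r \<Longrightarrow> f y = (y - z)^(m + 2) * q y"
      using powser_expansion_obtain_multiple_zero[OF f \<open>0 < r\<close>] by blast
    then show ?thesis
      using Hf_bounded_near_multiple_zero[OF _ \<open>0 < r\<close>] by blast
  next
    case vanishing
    have "f x = 0" if "x \<in> ball z r" for x
    proof -
      have "(\<lambda>n. 0) sums f x"
        using f that vanishing unfolding powser_expansion_def by simp
      then show ?thesis
        by (rule sums_unique2[OF _ sums_zero])
    qed
    moreover have "eventually (\<lambda>x. x \<in> ball z r) (nhds z)"
      using \<open>0 < r\<close> by (intro eventually_nhds_in_open) simp_all
    ultimately have "eventually (\<lambda>x. f x = 0) (nhds z)"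
      by (auto elim: eventually_mono)
    then show ?thesis
      by (auto elim: eventually_mono)
  qed
qed

lemma bounded_on_compact_if_locally_bounded:
  fixes h :: "'a::topological_space \<Rightarrow> real"
  assumes "compact S"
    and local: "\<And>z. z \<in> S \<Longrightarrow> \<exists>K. eventually (\<lambda>x. P x \<longrightarrow> \<bar>h x\<bar> \<le> K) (nhds z)"
  shows "\<exists>K. \<forall>x\<in>S. P x \<longrightarrow> \<bar>h x\<bar> \<le> K"
proof -
  have "\<forall>z\<in>S. \<exists>U K. open U \<and> z \<in> U \<and> (\<forall>x\<in>U. P x \<longrightarrow> \<bar>h x\<bar> \<le> K)"
  proof
    fix z assume "z \<in> S"
    then obtain K where "eventually (\<lambda>x. P x \<longrightarrow> \<bar>h x\<bar> \<le> K) (nhds z)"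
      using local by blast
    then show "\<exists>U K. open U \<and> z \<in> U \<and> (\<forall>x\<in>U. P x \<longrightarrow> \<bar>h x\<bar> \<le> K)"
      unfolding eventually_nhds by auto
  qed
  then obtain U K where U: "\<And>z. z \<in> S \<Longrightarrow> open (U z)" "\<And>z. z \<in> S \<Longrightarrow> z \<in> U z"
    and K: "\<And>z x. z \<in> S \<Longrightarrow> x \<in> U z \<Longrightarrow> P x \<Longrightarrow> \<bar>h x\<bar> \<le> K z"
    by metis
  have cover: "S \<subseteq> (\<Union>z\<in>S. U z)"
    using U(2) by blast
  obtain T where "T \<subseteq> S" "finite T" "S \<subseteq> (\<Union>z\<in>T. U z)"
    by (rule compactE_image[OF \<open>compact S\<close> U(1) cover])
  have "\<bar>h x\<bar> \<le> (\<Sum>z\<in>T. \<bar>K z\<bar>)" if "x \<in> S" "P x" for x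
  proof -
    obtain z where "z \<in> T" "x \<in> U z"
      using \<open>S \<subseteq> (\<Union>z\<in>T. U z)\<close> \<open>x \<in> S\<close> by blast
    then have "\<bar>h x\<bar> \<le> \<bar>K z\<bar>"
      using K[of z x] \<open>T \<subseteq> S\<close> \<open>P x\<close> by auto
    also have "\<dots> \<le> (\<Sum>z\<in>T. \<bar>K z\<bar>)"
      using \<open>finite T\<close> \<open>z \<in> T\<close> by (intro member_le_sum) auto
    finally show ?thesis .
  qed
  then show ?thesis by blast
qed

lemma eventually_less_if_Limsup_le:
  assumes "Limsup F (\<lambda>x. ereal (g x)) \<le> ereal C"
  shows "eventually (\<lambda>x. g x < C + 1) F"
proof -
  have "Limsup F (\<lambda>x. ereal (g x)) < ereal (C + 1)"
    using assms by (rule le_less_trans) simp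
  then show ?thesis
    by (auto dest: Limsup_lessD elim: eventually_mono)
qed

lemma Hf_bounded:
  assumes analytic: "real_analytic_on f {0<..}"
    and at_zero: "Limsup (at_right 0) (\<lambda>x. ereal \<bar>Hf f x\<bar>) \<le> ereal C"
    and at_infinity: "Limsup at_top (\<lambda>x. ereal \<bar>Hf f x\<bar>) \<le> ereal C"
  obtains B where "0 \<le> B" and "\<And>x. 0 < x \<Longrightarrow> f x \<noteq> 0 \<Longrightarrow> \<bar>Hf f x\<bar> \<le> B"
proof -
  obtain d where "0 < d" and near_zero: "\<And>x. 0 < x \<Longrightarrow> x < d \<Longrightarrow> \<bar>Hf f x\<bar> < C + 1"
    using eventually_less_if_Limsup_le[OF at_zero] unfolding eventually_at_right_field by auto
  obtain N where near_infinity: "\<And>x. N \<le> x \<Longrightarrow> \<bar>Hf f x\<bar> < C + 1"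
    using eventually_less_if_Limsup_le[OF at_infinity] unfolding eventually_at_top_linorder by auto
  have "\<exists>K. eventually (\<lambda>x. f x \<noteq> 0 \<longrightarrow> \<bar>Hf f x\<bar> \<le> K) (nhds z)" if "z \<in> {d..N}" for z
  proof -
    have "0 < z"
      using that \<open>0 < d\<close> by simp
    then obtain r a where "0 < r" "powser_expansion f a z r"
      using analytic unfolding real_analytic_on_iff_powser_expansion by (meson greaterThan_iff)
    then show ?thesis
      using Hf_locally_bounded \<open>0 < z\<close> by simp
  qed
  then obtain K where middle: "\<And>x. x \<in> {d..N} \<Longrightarrow> f x \<noteq> 0 \<Longrightarrow> \<bar>Hf f x\<bar> \<le> K"
    using bounded_on_compact_if_locally_bounded[OF compact_Icc, of d N "\<lambda>x. f x \<noteq> 0" "Hf f"] by blast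
  show ?thesis
  proof (rule that[of "max 0 (max (C + 1) K)"])
    fix x :: real assume "0 < x" "f x \<noteq> 0"
    then show "\<bar>Hf f x\<bar> \<le> max 0 (max (C + 1) K)"
      using near_zero[of x] near_infinity[of x] middle[of x] by force
  qed simp
qed

definition elasticity :: "(real \<Rightarrow> real) \<Rightarrow> real \<Rightarrow> real" where
  "elasticity f x = x * deriv f x / f x"

lemma abs_angle_rate_le:
  fixes F P Q :: real
  assumes "F \<noteq> 0"
  shows "\<bar>(F * (P + Q) - P^2) / (F^2 + P^2)\<bar> \<le> \<bar>F * Q / (F^2 + P^2)\<bar> + 3/2"
proof -
  define D where "D = F^2 + P^2"
  have "0 < D"
    using assms by (simp add: D_def add_pos_nonneg)
  have "2 * \<bar>F * P\<bar> \<le> D"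
    using sum_squares_bound[of "\<bar>F\<bar>" "\<bar>P\<bar>"] by (simp add: D_def abs_mult power2_eq_square)
  then have "\<bar>F * P / D\<bar> \<le> 1/2"
    using \<open>0 < D\<close> by (simp add: field_simps)
  moreover have "\<bar>P^2 / D\<bar> \<le> 1"
    using \<open>0 < D\<close> by (simp add: D_def field_simps)
  moreover have "(F * (P + Q) - P^2) / D = F * P / D + F * Q / D - P^2 / D"
    by (simp add: diff_divide_distrib add_divide_distrib algebra_simps)
  ultimately show ?thesis
    unfolding D_def[symmetric] by linarith
qed

lemma arctan_elasticity_lipschitz:
  fixes f :: "real \<Rightarrow> real"
  assumes d1: "\<And>x. 0 < x \<Longrightarrow> (f has_real_derivative deriv f x) (at x)"
    and d2: "\<And>x. 0 < x \<Longrightarrow> (deriv f has_real_derivative deriv (deriv f) x) (at x)"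
    and H: "\<And>x. 0 < x \<Longrightarrow> f x \<noteq> 0 \<Longrightarrow> \<bar>Hf f x\<bar> \<le> B"
    and "0 < x" "0 < y" "f x \<noteq> 0"
    and small: "(B + 3/2) * \<bar>ln y - ln x\<bar> < pi/2 - \<bar>arctan (elasticity f x)\<bar>"
  shows "f y \<noteq> 0 \<and>
    \<bar>arctan (elasticity f y) - arctan (elasticity f x)\<bar> \<le> (B + 3/2) * \<bar>ln y - ln x\<bar>"
proof -
  define g where "g t = f (exp t)" for t
  define g1 where "g1 t = exp t * deriv f (exp t)" for t
  define g2 where "g2 t = exp t * deriv f (exp t) + exp t * exp t * deriv (deriv f) (exp t)" for t
  have dg: "(g has_real_derivative g1 t) (at t)" for t
    unfolding g_def g1_def using DERIV_chain2[OF d1 DERIV_exp] by (simp add: mult.commute)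
  have dg1: "(g1 has_real_derivative g2 t) (at t)" for t
    unfolding g1_def g2_def
    using DERIV_mult[OF DERIV_exp DERIV_chain2[OF d2 DERIV_exp]] by (simp add: algebra_simps)
  have rate: "\<bar>(g t * g2 t - (g1 t)^2) / ((g t)^2 + (g1 t)^2)\<bar> \<le> B + 3/2" if "g t \<noteq> 0" for t
  proof -
    define F P Q where "F = f (exp t)" and "P = exp t * deriv f (exp t)"
      and "Q = exp t * exp t * deriv (deriv f) (exp t)"
    have "\<bar>F * Q / (F^2 + P^2)\<bar> \<le> B"
      using H[of "exp t"] that by (simp add: Hf_def F_def P_def Q_def g_def power2_eq_square algebra_simps)
    moreover have "(g t * g2 t - (g1 t)^2) / ((g t)^2 + (g1 t)^2) = (F * (P + Q) - P^2) / (F^2 + P^2)"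
      by (simp add: g_def g1_def g2_def F_def P_def Q_def algebra_simps)
    ultimately show ?thesis
      using abs_angle_rate_le[of F P Q] that by (simp add: F_def g_def)
  qed
  have ratio: "g1 (ln u) / g (ln u) = elasticity f u" if "0 < u" for u
    using that by (simp add: g_def g1_def elasticity_def)
  have "g (ln x) \<noteq> 0"
    using \<open>0 < x\<close> \<open>f x \<noteq> 0\<close> by (simp add: g_def)
  from arctan_ratio_lipschitz[OF dg dg1 rate this, of "ln y"] show ?thesis
    using small ratio[OF \<open>0 < x\<close>] ratio[OF \<open>0 < y\<close>] \<open>0 < y\<close> by (simp add: g_def)
qed

lemma kappa_eq_elasticity:
  assumes "0 < x" and "f x \<noteq> 0"
  shows "kappa f x = ereal \<bar>elasticity f x\<bar>"
  using assms by (simp add: kappa_def elasticity_def abs_mult)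

lemma reldist_less_ereal_iff:
  assumes "0 < x"
  shows "reldist y x < ereal \<delta> \<longleftrightarrow> 0 < y \<and> \<bar>ln y - ln x\<bar> < \<delta>"
proof (cases "0 < y")
  case True
  then have "reldist y x = ereal \<bar>ln y - ln x\<bar>"
    using assms by (simp add: reldist_def ln_div abs_minus_commute)
  then show ?thesis
    using True by simp
next
  case False
  then have "reldist y x = \<infinity>"
    using assms by (auto simp: reldist_def zero_less_mult_iff)
  then show ?thesis
    using False by simp
qed

lemma abs_elasticity_le_if_close:
  fixes f :: "real \<Rightarrow> real"
  assumes d1: "\<And>x. 0 < x \<Longrightarrow> (f has_real_derivative deriv f x) (at x)"
    and d2: "\<And>x. 0 < x \<Longrightarrow> (deriv f has_real_derivative deriv (deriv f) x) (at x)"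
    and H: "\<And>x. 0 < x \<Longrightarrow> f x \<noteq> 0 \<Longrightarrow> \<bar>Hf f x\<bar> \<le> B"
    and "0 < x" "0 < y" "f x \<noteq> 0"
    and close: "(B + 3/2) * \<bar>ln y - ln x\<bar> \<le> 1 / (2 * (1 + \<bar>elasticity f x\<bar>))"
  shows "f y \<noteq> 0 \<and> \<bar>elasticity f y\<bar> \<le> 2 * (1 + \<bar>elasticity f x\<bar>)"
proof -
  define m where "m = 1 + \<bar>elasticity f x\<bar>"
  define h where "h = 1 / (2 * m)"
  have "0 < m"
    by (simp add: m_def add_pos_nonneg)
  then have "0 < h" and "1 / m = 2 * h"
    by (simp_all add: h_def)
  then have gap: "2 * h \<le> pi/2 - \<bar>arctan (elasticity f x)\<bar>"
    using inverse_one_plus_abs_le_pi_half_minus_abs_arctan[of "elasticity f x"]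
    unfolding m_def by linarith
  have close: "(B + 3/2) * \<bar>ln y - ln x\<bar> \<le> h"
    using close by (simp add: h_def m_def)
  then have "(B + 3/2) * \<bar>ln y - ln x\<bar> < pi/2 - \<bar>arctan (elasticity f x)\<bar>"
    using gap \<open>0 < h\<close> by linarith
  from arctan_elasticity_lipschitz[OF d1 d2 H \<open>0 < x\<close> \<open>0 < y\<close> \<open>f x \<noteq> 0\<close> this]
  have "f y \<noteq> 0"
    and "\<bar>arctan (elasticity f y) - arctan (elasticity f x)\<bar> \<le> (B + 3/2) * \<bar>ln y - ln x\<bar>"
    by auto
  then have "\<bar>arctan (elasticity f y)\<bar> \<le> pi/2 - h"
    using close gap by linarith
  then have "\<bar>elasticity f y\<bar> \<le> 2 * m"
    using abs_le_if_abs_arctan_le[OF _ \<open>0 < h\<close>] by (simp add: h_def)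
  with \<open>f y \<noteq> 0\<close> show ?thesis
    by (simp add: m_def)
qed

lemma amenable_if_Hf_bounded:
  fixes f :: "real \<Rightarrow> real"
  assumes d1: "\<And>x. 0 < x \<Longrightarrow> (f has_real_derivative deriv f x) (at x)"
    and d2: "\<And>x. 0 < x \<Longrightarrow> (deriv f has_real_derivative deriv (deriv f) x) (at x)"
    and H: "\<And>x. 0 < x \<Longrightarrow> f x \<noteq> 0 \<Longrightarrow> \<bar>Hf f x\<bar> \<le> B" and "0 \<le> B"
  shows "amenable f {0<..}"
  unfolding amenable_def
proof (intro exI[of _ "2 * B + 6"] conjI ballI impI)
  txt \<open>\<open>2 * B + 6 = 2 M + 3\<close> for the Lipschitz constant \<open>M = B + 3/2\<close> of the angle.\<close>
  define C where "C = 2 * B + 6"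
  show "0 < 2 * B + 6"
    using \<open>0 \<le> B\<close> by simp
  fix x :: real assume "x \<in> {0<..}" and "kappa f x < \<infinity>"
  then have "0 < x" and "f x \<noteq> 0"
    by (auto simp: kappa_def)
  define m where "m = 1 + \<bar>elasticity f x\<bar>"
  have "1 \<le> m"
    by (simp add: m_def)
  have mu_x: "mu f x = ereal m"
    using kappa_eq_elasticity[of x f, OF \<open>0 < x\<close> \<open>f x \<noteq> 0\<close>] by (simp add: mu_def m_def)
  define \<delta> where "\<delta> = 1 / (C * m)"
  have "1 / (ereal (2 * B + 6) * mu f x) = ereal \<delta>"
    using \<open>1 \<le> m\<close> \<open>0 \<le> B\<close> by (simp add: mu_x \<delta>_def C_def one_ereal_def)
  then have ball_eq: "{y. reldist y x < 1 / (ereal (2 * B + 6) * mu f x)} = {y. 0 < y \<and> \<bar>ln y - ln x\<bar> < \<delta>}"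
    using reldist_less_ereal_iff[OF \<open>0 < x\<close>] by simp
  have "mu f y \<le> ereal C * mu f x" if "0 < y" and "\<bar>ln y - ln x\<bar> < \<delta>" for y
  proof -
    have "(B + 3/2) * \<bar>ln y - ln x\<bar> \<le> (B + 3/2) * \<delta>"
      using that \<open>0 \<le> B\<close> by (intro mult_left_mono) auto
    also have "\<dots> = (B + 3/2) / C * (1 / m)"
      by (simp add: \<delta>_def)
    also have "\<dots> \<le> 1 / 2 * (1 / m)"
      using \<open>1 \<le> m\<close> \<open>0 \<le> B\<close> by (intro mult_right_mono) (auto simp: C_def field_simps)
    finally have "f y \<noteq> 0 \<and> \<bar>elasticity f y\<bar> \<le> 2 * m"
      using abs_elasticity_le_if_close[OF d1 d2 H \<open>0 < x\<close> \<open>0 < y\<close> \<open>f x \<noteq> 0\<close>] by (simp add: m_def)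
    moreover have "3 * m \<le> C * m"
      using \<open>1 \<le> m\<close> \<open>0 \<le> B\<close> by (intro mult_right_mono) (auto simp: C_def)
    ultimately have "f y \<noteq> 0" and "1 + \<bar>elasticity f y\<bar> \<le> C * m"
      using \<open>1 \<le> m\<close> by linarith+
    then show ?thesis
      using kappa_eq_elasticity[of y f, OF \<open>0 < y\<close>] unfolding mu_x
      by (simp add: mu_def add.commute)
  qed
  then show "let S = {y. reldist y x < 1 / (ereal (2 * B + 6) * mu f x)}
      in S \<subseteq> {0<..} \<and> (\<forall>y\<in>S. mu f y \<le> ereal (2 * B + 6) * mu f x)"
    unfolding ball_eq C_def by auto
qed

theorem proposition4:
  fixes f :: "real \<Rightarrow> real"
  assumes analytic: "real_analytic_on f {0<..}"
    and nonzero: "\<exists>x>0. f x \<noteq> 0"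
    and zeros_cond: "\<And>xs :: nat \<Rightarrow> real.
        (\<forall>j. xs j > 0) \<Longrightarrow>
        (xs \<longlonglongrightarrow> 0 \<or> filterlim xs at_top sequentially) \<Longrightarrow>
        ((\<lambda>j. reldist_set (xs j) {x. x > 0 \<and> f x = 0}) \<longlonglongrightarrow> 0) \<Longrightarrow>
        ((\<lambda>j. kappa f (xs j)) \<longlonglongrightarrow> \<infinity>)"
    and H_cond: "\<exists>C>0. Limsup (at_right 0) (\<lambda>x. ereal \<bar>Hf f x\<bar>) \<le> ereal C \<and>
                       Limsup at_top (\<lambda>x. ereal \<bar>Hf f x\<bar>) \<le> ereal C"
  shows "amenable f {0<..}"
proof -
  obtain C where "Limsup (at_right 0) (\<lambda>x. ereal \<bar>Hf f x\<bar>) \<le> ereal C"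
    and "Limsup at_top (\<lambda>x. ereal \<bar>Hf f x\<bar>) \<le> ereal C"
    using H_cond by blast
  then obtain B where "0 \<le> B" and B: "\<And>x. 0 < x \<Longrightarrow> f x \<noteq> 0 \<Longrightarrow> \<bar>Hf f x\<bar> \<le> B"
    using Hf_bounded[OF analytic] by blast
  have "\<And>x. 0 < x \<Longrightarrow> (f has_real_derivative deriv f x) (at x)"
    and "\<And>x. 0 < x \<Longrightarrow> (deriv f has_real_derivative deriv (deriv f) x) (at x)"
    using real_analytic_on_DERIV[OF analytic] real_analytic_on_DERIV[OF real_analytic_on_deriv[OF analytic]]
    by simp_all
  then show ?thesis
    using B \<open>0 \<le> B\<close> by (rule amenable_if_Hf_bounded)
qed

end
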